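(* Let $s>1/2$ and for $w=\sum_{n\in\mathbb Z}w_ne_n\in H^s$ define $$N(w)=\Big(2w_0(\|w\|^2_H-|w_0|^2)+\bar w_0[w,w]\Big)e_0+\sum_{n\ne0}\Big(w_n(2\|w\|^2_H-|w_n|^2-2|w_{-n}|^2)+\bar w_{-n}[w,w]\Big)e_n.$$ Then $[N(w),\bar w]$ is real and $$[N(w),\bar w]\ge \|w\|^4_H.$$
   Context: $e_n(x)=e^{inx}$; $H=L^2_{per}(-\pi,\pi)$ (complex-valued, $2\pi$-periodic) with $\|w\|_H^2=\sum_n|w_n|^2$; $H^s$ is the periodic Sobolev space with $\|w\|_{H^s}^2=\sum_n(|n|^2+1)^s|w_n|^2$. For $w=\sum w_ne_n$, $v=\sum v_ne_n$, $[w,v]:=\sum_{n}w_nv_{-n}$; $\bar w=\sum_n\bar w_{-n}e_n$ is the complex conjugate function (so $[v,\bar w]=\sum_n v_n\bar w_n$ is the $H$-inner product). *)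

theory Defs
  imports "HOL-Analysis.Analysis"
begin

text \<open>A 2pi-periodic function is represented by its Fourier coefficients
  w :: int => complex, i.e. w = sum_n (w n) e_n.\<close>

definition in_Hs :: "real \<Rightarrow> (int \<Rightarrow> complex) \<Rightarrow> bool" where
  "in_Hs s w \<longleftrightarrow> (\<lambda>n. (real_of_int (n^2) + 1) powr s * (cmod (w n))^2) summable_on UNIV"

definition normH_sq :: "(int \<Rightarrow> complex) \<Rightarrow> real" where
  "normH_sq w = (\<Sum>\<^sub>\<infinity>n. (cmod (w n))^2)"

definition bracket :: "(int \<Rightarrow> complex) \<Rightarrow> (int \<Rightarrow> complex) \<Rightarrow> complex" where
  "bracket w v = (\<Sum>\<^sub>\<infinity>n. w n * v (-n))"

definition conjf :: "(int \<Rightarrow> complex) \<Rightarrow> (int \<Rightarrow> complex)" where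
  "conjf w = (\<lambda>n. cnj (w (-n)))"

definition Nop :: "(int \<Rightarrow> complex) \<Rightarrow> (int \<Rightarrow> complex)" where
  "Nop w = (\<lambda>n. if n = 0 then
       2 * w 0 * complex_of_real (normH_sq w - (cmod (w 0))^2) + cnj (w 0) * bracket w w
     else
       w n * complex_of_real (2 * normH_sq w - (cmod (w n))^2 - 2 * (cmod (w (-n)))^2)
         + cnj (w (-n)) * bracket w w)"

end

theory Submission
  imports Defs
begin

(* Write a_n = |w_n|^2.  Expanding the bracket gives
     [N(w), conj w] = 2 |w|^4 + |[w,w]|^2 - sum_n q_n,
   where q_n = a_n (a_n + 2 a_{-n}) for n ~= 0 and q_0 = 2 a_0^2 (local_quartic).
   The point is the identity
     |w|^4 + |[w,w]|^2 = 1/2 sum_{n,m} |w_n conj(w_m) + conj(w_{-n}) w_{-m}|^2,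
   a double sum of non-negative terms.  Its diagonal m = n contributes (a_n + a_{-n})^2 and
   its antidiagonal m = -n ~= 0 contributes 4 a_n a_{-n}; together they dominate q_n + q_{-n},
   so sum_n q_n <= |w|^4 + |[w,w]|^2. *)

lemma cmod_add_squared_cnj:
  "(cmod (x + y))^2 = (cmod x)^2 + (cmod y)^2 + 2 * Re (x * cnj y)"
  by (simp add: cmod_power2 power2_sum)

lemma has_sum_diff:
  fixes f g :: "'a \<Rightarrow> 'b::topological_ab_group_add"
  assumes "(f has_sum a) A" and "(g has_sum b) A"
  shows "((\<lambda>x. f x - g x) has_sum (a - b)) A"
proof -
  have "((\<lambda>x. - g x) has_sum - b) A"
    using has_sum_uminus[of g A "- b"] assms(2) by simp
  then show ?thesis
    using has_sum_add[OF assms(1)] by fastforce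
qed

lemma has_sum_Times_mult:
  fixes f g :: "'a \<Rightarrow> 'b::{banach, real_normed_div_algebra}"
  assumes f: "(\<lambda>x. norm (f x)) summable_on A" and g: "(\<lambda>y. norm (g y)) summable_on B"
  shows "((\<lambda>(x, y). f x * g y) has_sum (infsum f A * infsum g B)) (A \<times> B)"
proof -
  have "\<forall>x\<in>A. (\<lambda>y. norm (f x * g y)) summable_on B"
    using summable_on_cmult_right[OF g] by (simp add: norm_mult)
  moreover have "(\<lambda>x. norm (infsum (\<lambda>y. norm (f x * g y)) B)) summable_on A"
    using summable_on_cmult_left[OF f, where c = "infsum (\<lambda>y. norm (g y)) B"]
    by (simp add: norm_mult infsum_cmult_right g infsum_nonneg)
  ultimately have summable: "(\<lambda>(x, y). f x * g y) summable_on A \<times> B"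
    using Infinite_Sum.abs_summable_on_Sigma_iff[where f = "\<lambda>(x, y). f x * g y" and A = A and B = "\<lambda>_. B"]
    by (auto intro: abs_summable_summable)
  have "infsum (\<lambda>(x, y). f x * g y) (A \<times> B) = infsum (\<lambda>x. infsum (\<lambda>y. f x * g y) B) A"
    using infsum_Sigma_banach[OF summable] by simp
  also have "\<dots> = infsum f A * infsum g B"
    using abs_summable_summable[OF f] abs_summable_summable[OF g]
    by (simp add: infsum_cmult_right infsum_cmult_left)
  finally show ?thesis
    by (metis has_sum_infsum[OF summable])
qed

lemma bij_uminus: "bij (uminus :: 'a::group_add \<Rightarrow> 'a)"
  by (rule bij_betw_byWitness[where f' = uminus]) auto

lemma summable_on_reflect_iff:
  fixes f :: "'a::group_add \<Rightarrow> 'b::{comm_monoid_add, topological_space}"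
  shows "(\<lambda>n. f (- n)) summable_on UNIV \<longleftrightarrow> f summable_on UNIV"
  using summable_on_reindex_bij_betw[OF bij_uminus] .

lemma infsum_reflect:
  fixes f :: "'a::group_add \<Rightarrow> 'b::{comm_monoid_add, t2_space}"
  shows "(\<Sum>\<^sub>\<infinity>n. f (- n)) = (\<Sum>\<^sub>\<infinity>n. f n)"
  using infsum_reindex_bij_betw[OF bij_uminus] .

lemma diagonals_summable_le:
  fixes f :: "int \<times> int \<Rightarrow> real"
  assumes summable: "f summable_on UNIV" and nonneg: "\<And>p. 0 \<le> f p"
  defines "d \<equiv> \<lambda>n. f (n, n) + (if n = 0 then 0 else f (n, - n))"
  shows "d summable_on UNIV" and "(\<Sum>\<^sub>\<infinity>n. d n) \<le> (\<Sum>\<^sub>\<infinity>p. f p)"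
proof -
  define D1 where "D1 = range (\<lambda>n::int. (n, n))"
  define D2 where "D2 = (\<lambda>n::int. (n, - n)) ` (- {0})"
  have inj1: "inj (\<lambda>n::int. (n, n))" and inj2: "inj_on (\<lambda>n::int. (n, - n)) (- {0})"
    by (auto simp: inj_on_def)
  have disjoint: "D1 \<inter> D2 = {}"
    by (auto simp: D1_def D2_def)
  have f1: "f summable_on D1" and f2: "f summable_on D2"
    by (auto intro: summable_on_subset[OF summable])
  have diag: "(\<lambda>n. f (n, n)) summable_on UNIV" "(\<Sum>\<^sub>\<infinity>n. f (n, n)) = infsum f D1"
    using f1 summable_on_reindex[OF inj1, of f] infsum_reindex[OF inj1, of f]
    by (simp_all add: D1_def o_def)
  have antidiag': "(\<lambda>n. f (n, - n)) summable_on - {0}"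
      "(\<Sum>\<^sub>\<infinity>n\<in>- {0}. f (n, - n)) = infsum f D2"
    using f2 summable_on_reindex[OF inj2, of f] infsum_reindex[OF inj2, of f]
    by (simp_all add: D2_def o_def)
  have "(\<lambda>n. if n = 0 then 0 else f (n, - n)) summable_on UNIV \<longleftrightarrow>
      (\<lambda>n. f (n, - n)) summable_on - {0}"
    by (rule summable_on_cong_neutral) auto
  moreover have "(\<Sum>\<^sub>\<infinity>n. if n = 0 then 0 else f (n, - n)) = (\<Sum>\<^sub>\<infinity>n\<in>- {0}. f (n, - n))"
    by (rule infsum_cong_neutral) simp_all
  ultimately have antidiag: "(\<lambda>n. if n = 0 then 0 else f (n, - n)) summable_on UNIV"
      "(\<Sum>\<^sub>\<infinity>n. if n = 0 then 0 else f (n, - n)) = infsum f D2"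
    using antidiag' by simp_all
  show "d summable_on UNIV"
    unfolding d_def by (rule summable_on_add[OF diag(1) antidiag(1)])
  have "(\<Sum>\<^sub>\<infinity>n. d n) = infsum f (D1 \<union> D2)"
    unfolding d_def using infsum_add[OF diag(1) antidiag(1)] diag(2) antidiag(2)
    by (simp add: infsum_Un_disjoint[OF f1 f2 disjoint])
  also have "\<dots> \<le> (\<Sum>\<^sub>\<infinity>p. f p)"
    by (rule infsum_mono2) (auto intro: summable_on_subset[OF summable] nonneg)
  finally show "(\<Sum>\<^sub>\<infinity>n. d n) \<le> (\<Sum>\<^sub>\<infinity>p. f p)" .
qed

definition local_quartic :: "(int \<Rightarrow> complex) \<Rightarrow> int \<Rightarrow> real" where
  "local_quartic w n =
    (cmod (w n))^2 * (if n = 0 then 2 * (cmod (w 0))^2 else (cmod (w n))^2 + 2 * (cmod (w (- n)))^2)"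

lemma Nop_mult_conjf:
  "Nop w n * conjf w (- n) =
     of_real (2 * normH_sq w * (cmod (w n))^2 - local_quartic w n) + cnj (w n * w (- n)) * bracket w w"
proof -
  define r where "r = (if n = 0 then 2 * (normH_sq w - (cmod (w 0))^2)
    else 2 * normH_sq w - (cmod (w n))^2 - 2 * (cmod (w (- n)))^2)"
  have "Nop w n * conjf w (- n) = w n * cnj (w n) * of_real r + cnj (w n * w (- n)) * bracket w w"
    by (cases "n = 0") (simp_all add: Nop_def conjf_def r_def algebra_simps)
  also have "w n * cnj (w n) * of_real r = of_real ((cmod (w n))^2 * r)"
    by (simp flip: complex_norm_square)
  also have "(cmod (w n))^2 * r = 2 * normH_sq w * (cmod (w n))^2 - local_quartic w n"
    by (cases "n = 0") (simp_all add: r_def local_quartic_def algebra_simps)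
  finally show ?thesis .
qed

lemma square_summable_if_in_Hs:
  assumes "0 \<le> s" and "in_Hs s w"
  shows "(\<lambda>n. (cmod (w n))^2) summable_on UNIV"
proof (rule summable_on_comparison_test)
  show "(\<lambda>n. (real_of_int (n^2) + 1) powr s * (cmod (w n))^2) summable_on UNIV"
    using assms(2) unfolding in_Hs_def .
  fix n :: int
  have "1 \<le> (real_of_int (n^2) + 1) powr s"
    using assms(1) by (intro ge_one_powr_ge_zero) auto
  then show "(cmod (w n))^2 \<le> (real_of_int (n^2) + 1) powr s * (cmod (w n))^2"
    using mult_right_mono[of 1 _ "(cmod (w n))^2"] by simp
qed simp

context
  fixes w :: "int \<Rightarrow> complex"
  assumes square_summable: "(\<lambda>n. (cmod (w n))^2) summable_on UNIV"
begin

lemma square_le_normH_sq: "(cmod (w n))^2 \<le> normH_sq w"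
proof -
  have "(\<Sum>\<^sub>\<infinity>k\<in>{n}. (cmod (w k))^2) \<le> (\<Sum>\<^sub>\<infinity>k. (cmod (w k))^2)"
    by (rule infsum_mono2) (auto simp: square_summable)
  then show ?thesis
    by (simp add: normH_sq_def)
qed

lemma reflect_mult_abs_summable: "(\<lambda>n. norm (w n * w (- n))) summable_on UNIV"
proof (rule abs_summable_product)
  show "(\<lambda>n. norm (w n * w n)) summable_on UNIV"
    using square_summable by (simp add: norm_mult power2_eq_square)
  then show "(\<lambda>n. norm (w (- n) * w (- n))) summable_on UNIV"
    by (subst summable_on_reflect_iff[where f = "\<lambda>n. norm (w n * w n)"])
qed

lemma local_quartic_summable: "local_quartic w summable_on UNIV"
proof (rule summable_on_comparison_test)
  show "(\<lambda>n. (cmod (w n))^2 * (3 * normH_sq w)) summable_on UNIV"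
    by (rule summable_on_cmult_left[OF square_summable])
  fix n :: int
  have "2 * (cmod (w 0))^2 \<le> 3 * normH_sq w"
    using square_le_normH_sq[of 0] zero_le_power2[of "cmod (w 0)"] by linarith
  moreover have "(cmod (w n))^2 + 2 * (cmod (w (- n)))^2 \<le> 3 * normH_sq w"
    using square_le_normH_sq[of n] square_le_normH_sq[of "- n"] by linarith
  ultimately have "(if n = 0 then 2 * (cmod (w 0))^2 else (cmod (w n))^2 + 2 * (cmod (w (- n)))^2)
      \<le> 3 * normH_sq w"
    by simp
  then show "local_quartic w n \<le> (cmod (w n))^2 * (3 * normH_sq w)"
    unfolding local_quartic_def by (rule mult_left_mono) simp
  show "0 \<le> local_quartic w n"
    by (simp add: local_quartic_def)
qed

lemma bracket_Nop_conjf: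
  "bracket (Nop w) (conjf w) =
     of_real (2 * (normH_sq w)^2 - (\<Sum>\<^sub>\<infinity>n. local_quartic w n) + (cmod (bracket w w))^2)"
proof -
  let ?S = "normH_sq w" and ?B = "bracket w w"
  have "((\<lambda>n. 2 * ?S * (cmod (w n))^2) has_sum 2 * ?S * ?S) UNIV"
    using has_sum_cmult_right[OF has_sum_infsum[OF square_summable], where c = "2 * ?S"]
    by (simp add: normH_sq_def)
  from has_sum_diff[OF this has_sum_infsum[OF local_quartic_summable]]
  have real_part: "((\<lambda>n. of_real (2 * ?S * (cmod (w n))^2 - local_quartic w n) :: complex)
      has_sum of_real (2 * ?S * ?S - (\<Sum>\<^sub>\<infinity>n. local_quartic w n))) UNIV"
    by (rule has_sum_of_real)
  have "((\<lambda>n. w n * w (- n)) has_sum ?B) UNIV"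
    unfolding bracket_def using abs_summable_summable[OF reflect_mult_abs_summable]
    by (rule has_sum_infsum)
  then have "((\<lambda>n. cnj (w n * w (- n)) * ?B) has_sum cnj ?B * ?B) UNIV"
    by (intro has_sum_cmult_left) (subst has_sum_cnj_iff)
  from has_sum_add[OF real_part this]
  have "((\<lambda>n. Nop w n * conjf w (- n)) has_sum
      of_real (2 * ?S * ?S - (\<Sum>\<^sub>\<infinity>n. local_quartic w n)) + cnj ?B * ?B) UNIV"
    by (simp only: Nop_mult_conjf)
  moreover have "cnj ?B * ?B = of_real ((cmod ?B)^2)"
    by (subst complex_norm_square) (rule mult.commute)
  ultimately show ?thesis
    unfolding bracket_def[of "Nop w"] by (simp add: infsumI power2_eq_square)
qed

lemma has_sum_pair_norm_sq:
  "((\<lambda>(n, m). (cmod (w n * cnj (w m) + cnj (w (- n)) * w (- m)))^2)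
     has_sum 2 * ((normH_sq w)^2 + (cmod (bracket w w))^2)) UNIV"
proof -
  let ?S = "normH_sq w" and ?B = "bracket w w"
  define a where "a n = (cmod (w n))^2" for n
  define b where "b n = w n * w (- n)" for n
  have expand: "(cmod (w n * cnj (w m) + cnj (w (- n)) * w (- m)))^2
      = a n * a m + a (- n) * a (- m) + 2 * Re (b n * cnj (b m))" for n m
    by (simp add: cmod_add_squared_cnj a_def b_def norm_mult power_mult_distrib algebra_simps)
  have a_abs: "(\<lambda>n. norm (a n)) summable_on UNIV"
    using square_summable by (simp add: a_def)
  then have a_reflect_abs: "(\<lambda>n. norm (a (- n))) summable_on UNIV"
    by (subst summable_on_reflect_iff[where f = "\<lambda>n. norm (a n)"])
  have b_abs: "(\<lambda>n. norm (b n)) summable_on UNIV"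
    using reflect_mult_abs_summable by (simp add: b_def)
  have a_sum: "(\<Sum>\<^sub>\<infinity>n. a n) = ?S" and b_sum: "(\<Sum>\<^sub>\<infinity>n. b n) = ?B"
    by (simp_all add: a_def b_def normH_sq_def bracket_def)
  have aa: "((\<lambda>(n, m). a n * a m) has_sum ?S * ?S) UNIV"
    using has_sum_Times_mult[OF a_abs a_abs] by (simp add: a_sum)
  have aa_reflect: "((\<lambda>(n, m). a (- n) * a (- m)) has_sum ?S * ?S) UNIV"
    using has_sum_Times_mult[OF a_reflect_abs a_reflect_abs]
    by (simp add: infsum_reflect[where f = a] a_sum)
  have "(\<lambda>n. norm (cnj (b n))) summable_on UNIV"
    using b_abs by simp
  from has_sum_Times_mult[OF b_abs this]
  have "((\<lambda>(n, m). b n * cnj (b m)) has_sum ?B * cnj ?B) UNIV"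
    by (simp add: b_sum)
  from has_sum_cmult_right[OF has_sum_Re[OF this], where c = 2]
  have "((\<lambda>(n, m). 2 * Re (b n * cnj (b m))) has_sum 2 * Re (?B * cnj ?B)) UNIV"
    by (simp only: case_prod_unfold)
  moreover have "Re (?B * cnj ?B) = (cmod ?B)^2"
    by (simp flip: complex_norm_square)
  ultimately have bb: "((\<lambda>(n, m). 2 * Re (b n * cnj (b m))) has_sum 2 * (cmod ?B)^2) UNIV"
    by (simp only:)
  have "((\<lambda>(n, m). a n * a m + a (- n) * a (- m) + 2 * Re (b n * cnj (b m)))
      has_sum ?S * ?S + ?S * ?S + 2 * (cmod ?B)^2) UNIV"
    using has_sum_add[OF has_sum_add[OF aa aa_reflect] bb] by (simp add: case_prod_unfold)
  moreover have "?S * ?S + ?S * ?S + 2 * (cmod ?B)^2 = 2 * (?S^2 + (cmod ?B)^2)"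
    by (simp add: power2_eq_square)
  ultimately show ?thesis
    by (simp only: expand)
qed

lemma infsum_local_quartic_le:
  "(\<Sum>\<^sub>\<infinity>n. local_quartic w n) \<le> (normH_sq w)^2 + (cmod (bracket w w))^2"
proof -
  define c where "c = (\<lambda>(n, m). (cmod (w n * cnj (w m) + cnj (w (- n)) * w (- m)))^2)"
  define d where "d = (\<lambda>n. c (n, n) + (if n = 0 then 0 else c (n, - n)))"
  have c_sum: "(c has_sum 2 * ((normH_sq w)^2 + (cmod (bracket w w))^2)) UNIV"
    unfolding c_def by (rule has_sum_pair_norm_sq)
  have "0 \<le> c p" for p
    by (simp add: c_def case_prod_unfold)
  note d_le = diagonals_summable_le[OF has_sum_imp_summable[OF c_sum] this, folded d_def]
  have diag: "c (n, n) = ((cmod (w n))^2 + (cmod (w (- n)))^2)^2" for n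
  proof -
    have "w n * cnj (w n) + cnj (w (- n)) * w (- n) = of_real ((cmod (w n))^2 + (cmod (w (- n)))^2)"
      using complex_norm_square[of "w n"] complex_norm_square[of "w (- n)"] by (simp add: mult.commute)
    then have "c (n, n) = (cmod (of_real ((cmod (w n))^2 + (cmod (w (- n)))^2)))^2"
      by (simp only: c_def prod.case)
    then show ?thesis
      by (simp only: norm_of_real power2_abs)
  qed
  have antidiag: "c (n, - n) = 4 * (cmod (w n))^2 * (cmod (w (- n)))^2" for n
    by (simp add: c_def mult.commute[of "cnj (w (- n))"] norm_mult power_mult_distrib flip: mult_2)
  have "local_quartic w n + local_quartic w (- n) \<le> d n" for n
    by (cases "n = 0") (auto simp: local_quartic_def d_def diag antidiag power2_eq_square algebra_simps)
  then have "(\<Sum>\<^sub>\<infinity>n. local_quartic w n + local_quartic w (- n)) \<le> (\<Sum>\<^sub>\<infinity>n. d n)"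
    using local_quartic_summable summable_on_reflect_iff[where f = "local_quartic w"] d_le(1)
    by (intro infsum_mono summable_on_add) auto
  moreover have "(\<Sum>\<^sub>\<infinity>n. local_quartic w n + local_quartic w (- n)) = 2 * (\<Sum>\<^sub>\<infinity>n. local_quartic w n)"
    using local_quartic_summable summable_on_reflect_iff[where f = "local_quartic w"]
    by (simp add: infsum_add infsum_reflect[where f = "local_quartic w"])
  ultimately show ?thesis
    using d_le(2) infsumI[OF c_sum] by simp
qed

end

theorem lemma2p3:
  fixes s :: real and w :: "int \<Rightarrow> complex"
  assumes "s > 1/2" and "in_Hs s w"
  shows "bracket (Nop w) (conjf w) \<in> \<real> \<and> Re (bracket (Nop w) (conjf w)) \<ge> (normH_sq w)^2"
proof -
  have square_summable: "(\<lambda>n. (cmod (w n))^2) summable_on UNIV"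
    using assms by (intro square_summable_if_in_Hs[of s]) auto
  show ?thesis
    using bracket_Nop_conjf[OF square_summable] infsum_local_quartic_le[OF square_summable]
    by simp
qed

end
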